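(* Let $\gamma\geq 1$ and $p=\frac{\gamma}{\gamma+1}$. Then the Kronecker approximation cone $\tilde{K}_p$ is an approximation cone for $\gamma$-FRAPP, i.e. $\tilde{K}_p$ is a closed convex cone containing the row cone of $\gamma$-FRAPP.
   Context: Let $\mathcal{T}=\{a_1,\dots,a_N\}$ be the domain of tuples, and let the data domain consist of all sequences of $k$ tuples from $\mathcal{T}$, in lexicographic order. For an $N\times N$ column-stochastic transition matrix $Q$ whose $(b,a)$ entry $P_Q(a\rightarrow b)$ is the probability that a tuple with value $a$ is changed to $b$, let $\mathcal{M}_Q$ be the algorithm that replaces each tuple independently according to $Q$; its matrix representation (columns indexed by input datasets, rows by outputs, entries $P(\mathcal{M}_Q(D)=\omega)$) is the $k$-fold Kronecker product of $Q$ with itself. $\gamma$-FRAPP is the set of all $\mathcal{M}_Q$ such that $\frac{P_Q(b\rightarrow a)}{P_Q(c\rightarrow a)}\leq\gamma$ for all $a,b,c\in\mathcal{T}$. With $e_j$ the $j$-th standard basis column vector of length $N$, the Kronecker approximation cone $\tilde{K}_p$ is the set of vectors $\vec{x}$ (indexed by datasets) satisfying $\vec{x}\cdot\bigotimes_{\ell=1}^k\big(p\,e_{i_\ell}-(1-p)\,e_{j_\ell}\big)\geq 0$ for all $i_1,\dots,i_k,j_1,\dots,j_k\in\{1,\dots,N\}$. The consistent normal form of a privacy definition (set of algorithms) is the smallest superset closed under post-processing (composition with any algorithm with independent randomness) and convex combinations (running one member with probability $p$, another with probability $1-p$); its row cone is the set of vectors $\big(c\,P[\mathcal{M}(D_1)=\omega],c\,P[\mathcal{M}(D_2)=\omega],\dots\big)$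 with $c\ge0$, $\mathcal{M}$ in the consistent normal form, $\omega$ in the range of $\mathcal{M}$. An approximation cone of a privacy definition is a closed convex cone containing its row cone. *)

theory Defs
  imports "HOL-Analysis.Analysis" "HOL-Probability.Probability"
begin

text \<open>Tuples are the elements of a finite type 'n (so N = CARD('n)); a dataset is a
  sequence of k tuples, i.e. an element of 'n^'k (k = CARD('k)).\<close>

definition frapp :: "real \<Rightarrow> (('n::finite)^('k::finite) \<Rightarrow> ('n^'k) pmf) set" where
  "frapp \<gamma> = {M. \<exists>Q :: 'n \<Rightarrow> 'n pmf.
      (\<forall>a b c. pmf (Q b) a \<le> \<gamma> * pmf (Q c) a) \<and>
      (\<forall>D \<omega>. pmf (M D) \<omega> = (\<Prod>l\<in>UNIV. pmf (Q (D $ l)) (\<omega> $ l)))}"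

inductive_set cnf :: "('d \<Rightarrow> 'o pmf) set \<Rightarrow> ('d \<Rightarrow> 'o pmf) set" for S where
  base: "M \<in> S \<Longrightarrow> M \<in> cnf S"
| postproc: "M \<in> cnf S \<Longrightarrow> (\<lambda>D. bind_pmf (M D) A) \<in> cnf S"
| convex_comb: "M1 \<in> cnf S \<Longrightarrow> M2 \<in> cnf S \<Longrightarrow> 0 \<le> q \<Longrightarrow> q \<le> 1 \<Longrightarrow>
     (\<lambda>D. bind_pmf (bernoulli_pmf q) (\<lambda>b. if b then M1 D else M2 D)) \<in> cnf S"

definition row_cone :: "(('d::finite) \<Rightarrow> 'o pmf) set \<Rightarrow> (real^'d) set" where
  "row_cone S = {x. \<exists>c \<ge> 0. \<exists>M \<in> cnf S. \<exists>\<omega> \<in> (\<Union>D. set_pmf (M D)).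
      \<forall>D. x $ D = c * pmf (M D) \<omega>}"

definition kron_cone :: "real \<Rightarrow> (real^(('n::finite)^('k::finite))) set" where
  "kron_cone p = {x. \<forall>i j :: 'n^'k.
      0 \<le> (\<Sum>D\<in>UNIV. x $ D *
             (\<Prod>l\<in>UNIV. p * (if D $ l = i $ l then 1 else 0)
                          - (1 - p) * (if D $ l = j $ l then 1 else 0)))}"

end

theory Submission
  imports Defs
begin

text \<open>For a fixed output \<omega>, the pairing of the column \<open>D \<mapsto> P(M(D) = \<omega>)\<close> with a weight
  vector is preserved under post-processing and mixing, because the new column is a nonnegative
  combination of old ones.  So it suffices to check the Kronecker weights against \<open>M\<^sub>Q\<close> itself.
  There the pairing factors over the \<open>k\<close> positions, and each factor
  \<open>p Q(i\<^sub>l \<rightarrow> \<omega>\<^sub>l) - (1 - p) Q(j\<^sub>l \<rightarrow> \<omega>\<^sub>l) = (\<gamma> Q(i\<^sub>l \<rightarrow> \<omega>\<^sub>l) - Q(j\<^sub>l \<rightarrow> \<omega>\<^sub>l)) / (\<gamma> + 1)\<close>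
  is nonnegative by the \<open>\<gamma>\<close>-FRAPP ratio condition.\<close>

definition kron_weight :: "real \<Rightarrow> ('n::finite)^('k::finite) \<Rightarrow> 'n^'k \<Rightarrow> 'n^'k \<Rightarrow> real" where
  "kron_weight p i j D = (\<Prod>l\<in>UNIV. p * (if D $ l = i $ l then 1 else 0)
                                   - (1 - p) * (if D $ l = j $ l then 1 else 0))"

lemma kron_cone_eq:
  "kron_cone p = {x. \<forall>i j. 0 \<le> (\<Sum>D\<in>UNIV. x $ D * kron_weight p i j D)}"
  by (simp add: kron_cone_def kron_weight_def)

lemma closed_kron_cone: "closed (kron_cone p)"
  unfolding kron_cone_eq by (intro closed_Collect_all closed_Collect_le continuous_intros)

lemma convex_kron_cone: "convex (kron_cone p)"
  unfolding kron_cone_eq convex_def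
  by (auto simp: sum.distrib algebra_simps sum_distrib_left[symmetric]
           intro!: add_nonneg_nonneg mult_nonneg_nonneg)

lemma cone_kron_cone: "cone (kron_cone p)"
  unfolding kron_cone_eq cone_def
  by (auto simp: mult.assoc sum_distrib_left[symmetric] intro!: mult_nonneg_nonneg)

lemma nonneg_pairing_bind_pmf:
  fixes W :: "'d::finite \<Rightarrow> real"
  assumes N: "\<And>x. 0 \<le> (\<Sum>D\<in>UNIV. pmf (N D) x * W D)"
  shows "0 \<le> (\<Sum>D\<in>UNIV. pmf (bind_pmf (N D) A) y * W D)"
proof -
  let ?f = "\<lambda>D x. pmf (N D) x * pmf (A x) y * W D"
  have integrable: "integrable (count_space UNIV) (?f D)" for D
  proof -
    have "integrable (count_space UNIV) (\<lambda>x. pmf (N D) x * pmf (A x) y)"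
      by (rule Bochner_Integration.integrable_bound[OF integrable_pmf[of UNIV "N D"]])
         (auto simp: pmf_le_1 mult_left_le)
    then show ?thesis by (rule integrable_mult_left)
  qed
  have "pmf (bind_pmf (N D) A) y = (\<integral>x. pmf (N D) x * pmf (A x) y \<partial>count_space UNIV)" for D
    by (simp add: pmf_bind measure_pmf_eq_density integral_density)
  then have "(\<Sum>D\<in>UNIV. pmf (bind_pmf (N D) A) y * W D)
      = (\<Sum>D\<in>UNIV. \<integral>x. ?f D x \<partial>count_space UNIV)"
    by (simp add: integral_mult_left_zero)
  also have "\<dots> = (\<integral>x. (\<Sum>D\<in>UNIV. ?f D x) \<partial>count_space UNIV)"
    using integrable by (intro Bochner_Integration.integral_sum[symmetric]) auto
  also have "\<dots> = (\<integral>x. pmf (A x) y * (\<Sum>D\<in>UNIV. pmf (N D) x * W D) \<partial>count_space UNIV)"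
    by (simp add: sum_distrib_left mult_ac)
  also have "\<dots> \<ge> 0"
    using N by (intro integral_nonneg_AE AE_I2 mult_nonneg_nonneg) auto
  finally show ?thesis .
qed

lemma nonneg_pairing_bernoulli_mixture:
  fixes W :: "'d::finite \<Rightarrow> real"
  assumes M1: "0 \<le> (\<Sum>D\<in>UNIV. pmf (M1 D) y * W D)"
      and M2: "0 \<le> (\<Sum>D\<in>UNIV. pmf (M2 D) y * W D)"
      and q: "0 \<le> q" "q \<le> 1"
  shows "0 \<le> (\<Sum>D\<in>UNIV. pmf (bind_pmf (bernoulli_pmf q) (\<lambda>b. if b then M1 D else M2 D)) y * W D)"
proof -
  have "pmf (bind_pmf (bernoulli_pmf q) (\<lambda>b. if b then M1 D else M2 D)) y
      = q * pmf (M1 D) y + (1 - q) * pmf (M2 D) y" for D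
    using q by (simp add: pmf_bind mult_ac)
  then have "(\<Sum>D\<in>UNIV. pmf (bind_pmf (bernoulli_pmf q) (\<lambda>b. if b then M1 D else M2 D)) y * W D)
      = q * (\<Sum>D\<in>UNIV. pmf (M1 D) y * W D) + (1 - q) * (\<Sum>D\<in>UNIV. pmf (M2 D) y * W D)"
    by (simp add: distrib_right sum.distrib sum_distrib_left mult.assoc)
  also have "\<dots> \<ge> 0"
    using M1 M2 q by (intro add_nonneg_nonneg mult_nonneg_nonneg) auto
  finally show ?thesis .
qed

lemma nonneg_pairing_cnf:
  fixes W :: "'d::finite \<Rightarrow> real"
  assumes "M \<in> cnf S"
      and S: "\<And>M x. M \<in> S \<Longrightarrow> 0 \<le> (\<Sum>D\<in>UNIV. pmf (M D) x * W D)"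
  shows "0 \<le> (\<Sum>D\<in>UNIV. pmf (M D) y * W D)"
  using assms(1)
proof (induction arbitrary: y)
  case (base M)
  then show ?case by (rule S)
next
  case (postproc M A)
  then show ?case by (intro nonneg_pairing_bind_pmf)
next
  case (convex_comb M1 M2 q)
  then show ?case by (intro nonneg_pairing_bernoulli_mixture)
qed

lemma row_cone_subset_kron_cone:
  assumes "\<And>M \<omega> i j. M \<in> S \<Longrightarrow> 0 \<le> (\<Sum>D\<in>UNIV. pmf (M D) \<omega> * kron_weight p i j D)"
  shows "row_cone S \<subseteq> kron_cone p"
proof
  fix x
  assume "x \<in> row_cone S"
  then obtain c M \<omega> where c: "c \<ge> 0" and M: "M \<in> cnf S" and x: "\<And>D. x $ D = c * pmf (M D) \<omega>"
    unfolding row_cone_def by blast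
  have "0 \<le> (\<Sum>D\<in>UNIV. x $ D * kron_weight p i j D)" for i j
  proof -
    have "(\<Sum>D\<in>UNIV. x $ D * kron_weight p i j D)
        = c * (\<Sum>D\<in>UNIV. pmf (M D) \<omega> * kron_weight p i j D)"
      by (simp add: x sum_distrib_left mult.assoc)
    also have "\<dots> \<ge> 0"
      using c nonneg_pairing_cnf[OF M assms] by simp
    finally show ?thesis .
  qed
  then show "x \<in> kron_cone p"
    unfolding kron_cone_eq by blast
qed

lemma sum_vec_prod_nth:
  fixes h :: "'k::finite \<Rightarrow> 'n::finite \<Rightarrow> 'a::comm_semiring_1"
  shows "(\<Sum>D\<in>(UNIV::('n^'k) set). \<Prod>l\<in>UNIV. h l (D $ l)) = (\<Prod>l\<in>UNIV. \<Sum>a\<in>UNIV. h l a)"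
proof -
  have bij: "bij_betw vec_nth (UNIV::('n^'k) set) (PiE UNIV (\<lambda>_. UNIV))"
    by (rule bij_betwI[where g = vec_lambda]) auto
  have "(\<Prod>l\<in>UNIV. \<Sum>a\<in>UNIV. h l a) = (\<Sum>g\<in>PiE UNIV (\<lambda>_. UNIV). \<Prod>l\<in>UNIV. h l (g l))"
    by (rule prod_sum_PiE) auto
  also have "\<dots> = (\<Sum>D\<in>(UNIV::('n^'k) set). \<Prod>l\<in>UNIV. h l (D $ l))"
    by (rule sum.reindex_bij_betw[OF bij, symmetric])
  finally show ?thesis by simp
qed

lemma sum_mult_basis_diff:
  fixes q :: "'n::finite \<Rightarrow> real"
  shows "(\<Sum>a\<in>UNIV. q a * (p * (if a = i then 1 else 0) - (1 - p) * (if a = j then 1 else 0)))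
       = p * q i - (1 - p) * q j"
proof -
  have "(\<Sum>a\<in>UNIV. q a * (p * (if a = i then 1 else 0) - (1 - p) * (if a = j then 1 else 0)))
      = (\<Sum>a\<in>UNIV. if a = i then p * q a else 0) - (\<Sum>a\<in>UNIV. if a = j then (1 - p) * q a else 0)"
    by (subst sum_subtractf[symmetric], rule sum.cong) (auto simp: algebra_simps)
  then show ?thesis by (simp add: sum.delta)
qed

lemma frapp_kron_weight_nonneg:
  fixes M :: "('n::finite)^('k::finite) \<Rightarrow> ('n^'k) pmf"
  assumes "M \<in> frapp \<gamma>" and "0 \<le> \<gamma>" and p: "p = \<gamma> / (\<gamma> + 1)"
  shows "0 \<le> (\<Sum>D\<in>UNIV. pmf (M D) \<omega> * kron_weight p i j D)"
proof -
  obtain Q :: "'n \<Rightarrow> 'n pmf" where ratio: "\<And>a b c. pmf (Q b) a \<le> \<gamma> * pmf (Q c) a"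
    and M: "\<And>D. pmf (M D) \<omega> = (\<Prod>l\<in>UNIV. pmf (Q (D $ l)) (\<omega> $ l))"
    using assms(1) unfolding frapp_def by blast
  let ?q = "\<lambda>l a. pmf (Q a) (\<omega> $ l)"
  let ?h = "\<lambda>l a. ?q l a * (p * (if a = i $ l then 1 else 0) - (1 - p) * (if a = j $ l then 1 else 0))"
  have "(\<Sum>D\<in>UNIV. pmf (M D) \<omega> * kron_weight p i j D) = (\<Sum>D\<in>UNIV. \<Prod>l\<in>UNIV. ?h l (D $ l))"
    by (simp add: M kron_weight_def prod.distrib)
  also have "\<dots> = (\<Prod>l\<in>UNIV. \<Sum>a\<in>UNIV. ?h l a)"
    by (rule sum_vec_prod_nth)
  also have "\<dots> = (\<Prod>l\<in>UNIV. p * ?q l (i $ l) - (1 - p) * ?q l (j $ l))"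
    by (simp add: sum_mult_basis_diff)
  also have "\<dots> \<ge> 0"
  proof (intro prod_nonneg ballI)
    fix l
    have "1 - p = 1 / (\<gamma> + 1)"
      using \<open>0 \<le> \<gamma>\<close> by (simp add: p field_simps)
    then have "p * ?q l (i $ l) - (1 - p) * ?q l (j $ l)
             = (\<gamma> * ?q l (i $ l) - ?q l (j $ l)) / (\<gamma> + 1)"
      by (simp add: p diff_divide_distrib)
    also have "\<dots> \<ge> 0"
      using ratio[where a = "\<omega> $ l" and b = "j $ l" and c = "i $ l"] \<open>0 \<le> \<gamma>\<close> by simp
    finally show "0 \<le> p * ?q l (i $ l) - (1 - p) * ?q l (j $ l)" .
  qed
  finally show ?thesis .
qed

theorem lemma2:
  fixes \<gamma> p :: real and e :: "('n::finite)^('k::finite) \<Rightarrow> 'o"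
  assumes "\<gamma> \<ge> 1" and "p = \<gamma> / (\<gamma> + 1)"
  shows "closed (kron_cone p :: (real^('n^'k)) set) \<and> convex (kron_cone p :: (real^('n^'k)) set)
         \<and> cone (kron_cone p :: (real^('n^'k)) set)
         \<and> row_cone {(\<lambda>D. map_pmf e (M D)) | M. M \<in> frapp \<gamma>} \<subseteq> kron_cone p"
proof -
  have "0 \<le> (\<Sum>D\<in>UNIV. pmf (map_pmf e (M D)) \<omega> * kron_weight p i j D)"
    if "M \<in> frapp \<gamma>" for M :: "'n^'k \<Rightarrow> ('n^'k) pmf" and \<omega> i j
    unfolding map_pmf_def
    using frapp_kron_weight_nonneg[OF that _ assms(2)] assms(1)
    by (intro nonneg_pairing_bind_pmf) simp
  then have "row_cone {(\<lambda>D. map_pmf e (M D)) | M. M \<in> frapp \<gamma>} \<subseteq> kron_cone p"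
    by (intro row_cone_subset_kron_cone) blast
  then show ?thesis
    using closed_kron_cone convex_kron_cone cone_kron_cone by blast
qed

end
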